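(* Let $H$ be a Heyting algebra, $f:H\to H$ a strong monotone function and $a\in H$. If $f$ has a least fixed point $\mu.f$, then the functions $x\mapsto a\to f(x)$ and $x\mapsto a\wedge f(x)$ have least fixed points, and $\mu.(a\to f)=a\to\mu.f$ and $\mu.(a\wedge f)=a\wedge\mu.f$.
   Context: A monotone function $f:H\to H$ on a Heyting algebra is strong if $x\wedge f(y)\le f(x\wedge y)$ for all $x,y\in H$. For a monotone $g$, $\mu.g$ denotes the least prefixed point of $g$ (least $p$ with $g(p)\le p$), which when it exists is the least fixed point. *)

theory Defs
  imports Main
begin

class heyting_algebra = bounded_lattice +
  fixes himp :: "'a \<Rightarrow> 'a \<Rightarrow> 'a"
  assumes himp_residuation: "inf x y \<le> z \<longleftrightarrow> x \<le> himp y z"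

definition strong :: "('a::heyting_algebra \<Rightarrow> 'a) \<Rightarrow> bool" where
  "strong f \<longleftrightarrow> (\<forall>x y. inf x (f y) \<le> f (inf x y))"

definition is_least_prefixed :: "('a::order \<Rightarrow> 'a) \<Rightarrow> 'a \<Rightarrow> bool" where
  "is_least_prefixed g p \<longleftrightarrow> g p \<le> p \<and> (\<forall>q. g q \<le> q \<longrightarrow> p \<le> q)"

end

theory Submission
  imports Defs
begin

text \<open>Strength gives f (a \<rightarrow> q) \<le> a \<rightarrow> f q, so f commutes with a \<rightarrow> _ up to an inequality.
  Every prefixed point q of x \<mapsto> a \<rightarrow> f x or of x \<mapsto> a \<and> f x satisfies a \<and> f q \<le> q,
  which makes a \<rightarrow> q a prefixed point of f; hence \<mu>.f \<le> a \<rightarrow> q, i.e. a \<and> \<mu>.f \<le> q.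
  This gives leastness of a \<and> \<mu>.f directly, and of a \<rightarrow> \<mu>.f via
  a \<rightarrow> \<mu>.f \<le> a \<rightarrow> f (a \<rightarrow> q) \<le> a \<rightarrow> (a \<rightarrow> f q) = a \<rightarrow> f q \<le> q.\<close>

context heyting_algebra
begin

lemma le_himp_iff: "x \<le> himp a y \<longleftrightarrow> inf a x \<le> y"
  by (simp add: himp_residuation[symmetric] inf_commute)

lemma himp_mp: "inf a (himp a y) \<le> y"
  using le_himp_iff[of "himp a y" a y] by simp

lemma le_himp: "y \<le> himp a y"
  by (simp add: le_himp_iff)

lemma himp_mono: "y \<le> z \<Longrightarrow> himp a y \<le> himp a z"
  using himp_mp[of a y] by (simp add: le_himp_iff le_infI2)

lemma himp_himp_same: "himp a (himp a y) = himp a y"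
proof (rule order.antisym)
  have "inf a (inf a (himp a (himp a y))) \<le> y"
    using himp_mp[of a "himp a y"] by (simp add: le_himp_iff)
  then show "himp a (himp a y) \<le> himp a y"
    by (simp add: le_himp_iff inf_assoc[symmetric])
qed (rule le_himp)

end

lemma strongD: "strong f \<Longrightarrow> inf x (f y) \<le> f (inf x y)"
  by (simp add: strong_def)

lemma is_least_prefixedD:
  "is_least_prefixed g p \<Longrightarrow> g p \<le> p"
  "is_least_prefixed g p \<Longrightarrow> g q \<le> q \<Longrightarrow> p \<le> q"
  by (simp_all add: is_least_prefixed_def)

lemma least_prefixed_fixed:
  assumes "mono g" and "is_least_prefixed g p"
  shows "g p = p"
proof (rule antisym)
  show "g p \<le> p"
    using is_least_prefixedD(1)[OF assms(2)] .
  then show "p \<le> g p"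
    using is_least_prefixedD(2)[OF assms(2)] monoD[OF assms(1)] by blast
qed

lemma strong_mono_himp_le:
  fixes f :: "'a::heyting_algebra \<Rightarrow> 'a"
  assumes "mono f" and "strong f"
  shows "f (himp a q) \<le> himp a (f q)"
proof -
  have "inf a (f (himp a q)) \<le> f (inf a (himp a q))"
    using strongD[OF assms(2)] .
  also have "\<dots> \<le> f q"
    using monoD[OF assms(1) himp_mp] .
  finally show ?thesis
    by (simp add: le_himp_iff)
qed

lemma prefixed_himp_of_prefixed_inf:
  fixes f :: "'a::heyting_algebra \<Rightarrow> 'a"
  assumes "mono f" and "strong f" and "inf a (f q) \<le> q"
  shows "f (himp a q) \<le> himp a q"
proof -
  have "inf a (f (himp a q)) \<le> inf a (himp a (f q))"
    using strong_mono_himp_le[OF assms(1,2)] by (rule inf_mono[OF order_refl])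
  also have "\<dots> \<le> inf a (f q)"
    using himp_mp by simp
  also have "\<dots> \<le> q"
    by (rule assms(3))
  finally show ?thesis
    by (simp add: le_himp_iff)
qed

lemma inf_least_prefixed_le:
  fixes f :: "'a::heyting_algebra \<Rightarrow> 'a"
  assumes "mono f" and "strong f" and "is_least_prefixed f p"
    and "inf a (f q) \<le> q"
  shows "inf a p \<le> q"
proof -
  have "p \<le> himp a q"
    using is_least_prefixedD(2)[OF assms(3) prefixed_himp_of_prefixed_inf[OF assms(1,2,4)]] .
  then show ?thesis
    by (simp only: le_himp_iff)
qed

theorem mainTheorem6:
  fixes f :: "'a::heyting_algebra \<Rightarrow> 'a" and a p :: 'a
  assumes "mono f" and "strong f"
    and "is_least_prefixed f p"
  shows "is_least_prefixed (\<lambda>x. himp a (f x)) (himp a p)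
       \<and> is_least_prefixed (\<lambda>x. inf a (f x)) (inf a p)"
proof -
  note mu_le = inf_least_prefixed_le[OF assms]
  have fp: "f p = p"
    using least_prefixed_fixed[OF assms(1,3)] .
  have "himp a (f (himp a p)) \<le> himp a p"
    using himp_mono[OF strong_mono_himp_le[OF assms(1,2)], of a a p]
    by (simp add: himp_himp_same fp)
  moreover have "himp a p \<le> q" if q: "himp a (f q) \<le> q" for q
  proof -
    have "inf a (f q) \<le> q"
      using inf_le2 le_himp q by (rule order_trans[OF order_trans])
    then have "p \<le> himp a q"
      using mu_le[of a q] by (simp only: le_himp_iff)
    then have "f p \<le> himp a (f q)"
      by (rule order_trans[OF monoD[OF assms(1)] strong_mono_himp_le[OF assms(1,2)]])
    then have "himp a p \<le> himp a (f q)"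
      using himp_mono[of "f p" "himp a (f q)" a] by (simp add: fp himp_himp_same)
    then show ?thesis
      using q by (rule order_trans)
  qed
  moreover have "inf a (f (inf a p)) \<le> inf a p"
    using monoD[OF assms(1) inf_le2[of a p]] fp by (simp add: le_infI2)
  ultimately show ?thesis
    using mu_le by (simp add: is_least_prefixed_def)
qed

end
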